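(* Let $n\ge2$, let $k\in\mathbb{N}$ be the exponent of the largest power of $2$ dividing $n$, let $n_0=n/2^k$, and let $n_0=\sum_{i=1}^{\ell}2^{m_i}$ with $\ell\ge1$ and $m_1>\cdots>m_{\ell-1}>m_\ell=0$ be its binary expansion. (a) If $\ell=1$ (i.e. $n=2^k$), then $QB(n)=\{(n/2,n/2)\}$. (b) If $\ell>1$, then $QB(n)$ consists exactly of the following pairs, which are pairwise distinct: (b.1) the pair $\bigl(2^k(\sum_{i=1}^{\ell-1}2^{m_i-1}+1),\ 2^k\sum_{i=1}^{\ell-1}2^{m_i-1}\bigr)$; (b.2) for every $j\in\{2,\dots,\ell-1\}$ with $m_j>m_{j+1}+1$, the pair $\bigl(2^k(\sum_{i=1}^{j-1}2^{m_i-1}+2^{m_j}),\ n-2^k(\sum_{i=1}^{j-1}2^{m_i-1}+2^{m_j})\bigr)$; (b.3) for every $j\in\{2,\dots,\ell-1\}$ with $m_j<m_{j-1}-1$, the pair $\bigl(n-2^k\sum_{i=1}^{j-1}2^{m_i-1},\ 2^k\sum_{i=1}^{j-1}2^{m_i-1}\bigr)$; (b.4) if $k\ge1$, the pair $(n/2,n/2)$.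
   Context: Bifurcating trees: rooted trees in which every internal node has exactly two children; $\mathcal{T}_n$ is the set of isomorphism classes of bifurcating trees with $n$ leaves. The Colless index is $\mathcal{C}(T)=\sum_{v}|\kappa_T(v_1)-\kappa_T(v_2)|$, summed over internal nodes $v$ with children $v_1,v_2$, where $\kappa_T(w)$ is the number of leaves descending from $w$; $c_n=\min\{\mathcal{C}(T):T\in\mathcal{T}_n\}$. For $n\ge2$, $QB(n)=\{(n_a,n_b)\in\mathbb{N}^2: n_a\ge n_b\ge1,\ n_a+n_b=n,\ c_{n_a}+c_{n_b}+n_a-n_b=c_n\}$. *)

theory Defs
  imports Main
begin

text \<open>Trees are represented up to labelling;
  the Colless index is invariant under isomorphism, so the minimum over
  concrete trees equals the minimum over isomorphism classes.\<close>
datatype btree = Leaf | Node btree btree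

fun leaves :: "btree \<Rightarrow> nat" where
  "leaves Leaf = 1"
| "leaves (Node l r) = leaves l + leaves r"

fun colless :: "btree \<Rightarrow> nat" where
  "colless Leaf = 0"
| "colless (Node l r) = colless l + colless r
      + nat \<bar>int (leaves l) - int (leaves r)\<bar>"

definition min_colless :: "nat \<Rightarrow> nat" where
  "min_colless n = (LEAST c. \<exists>t. leaves t = n \<and> colless t = c)"

definition QB :: "nat \<Rightarrow> (nat \<times> nat) set" where
  "QB n = {(na, nb). na \<ge> nb \<and> nb \<ge> 1 \<and> na + nb = n \<and>
              min_colless na + min_colless nb + (na - nb) = min_colless n}"

datatype qb_label = B1 | B2 nat | B3 nat | B4

end

theory Submission
  imports Defs "HOL-Library.Discrete_Functions"
begin

text \<open>The minimal Colless index satisfies \<open>c n = c \<lceil>n/2\<rceil> + c \<lfloor>n/2\<rfloor> + n mod 2\<close>,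
  attained by the maximally balanced tree, so \<open>(a, b) \<in> QB (a + b)\<close> exactly when the
  excess \<open>c a + c b + (a - b) - c (a + b)\<close> vanishes. Depending on the parities of \<open>a\<close>
  and \<open>b\<close>, this excess is twice, or a sum of, excesses of halved pairs; by induction it
  vanishes iff \<open>a - b \<le> 2 ^ t\<close> for a power \<open>2 ^ t\<close> dividing \<open>b\<close>, or dividing \<open>a\<close>
  with \<open>2 ^ (t + 1) \<le> a\<close>.
  Doubling \<open>n\<close> adds the split \<open>(n, n)\<close> and doubles all others, which reduces everything
  to the odd part \<open>n\<^sub>0\<close>. If \<open>a + b = n\<^sub>0\<close> and \<open>2 ^ T\<close> divides \<open>2 b\<close> (resp.
  \<open>2 a - 2 ^ T\<close>), then \<open>a - b\<close> (resp. \<open>2 ^ T - (a - b)\<close>) is the residue of \<open>n\<^sub>0\<close>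
  modulo \<open>2 ^ T\<close>, i.e. a tail of the binary expansion of \<open>n\<^sub>0\<close>; this pins the optimal
  splits down to the listed pairs. Distinct listed pairs have differences of distinct
  binary length.\<close>

lemma parity_pair_cases:
  fixes a b :: nat
  obtains (even_even) p q where "a = 2 * p" "b = 2 * q"
    | (odd_odd) p q where "a = 2 * p + 1" "b = 2 * q + 1"
    | (odd_even) p q where "a = 2 * p + 1" "b = 2 * q"
    | (even_odd) p q where "a = 2 * p" "b = 2 * q + 1"
proof -
  have "\<exists>p. a = 2 * p \<or> a = 2 * p + 1" "\<exists>q. b = 2 * q \<or> b = 2 * q + 1"
    by presburger+
  then show ?thesis using that by blast
qed

section \<open>The minimal Colless index\<close>

fun colless_bal :: "nat \<Rightarrow> nat" where
  "colless_bal n =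
     (if n \<le> 1 then 0 else colless_bal ((n + 1) div 2) + colless_bal (n div 2) + n mod 2)"

declare colless_bal.simps [simp del]

fun balanced_tree :: "nat \<Rightarrow> btree" where
  "balanced_tree n =
     (if n \<le> 1 then Leaf else Node (balanced_tree ((n + 1) div 2)) (balanced_tree (n div 2)))"

declare balanced_tree.simps [simp del]

lemma balanced_tree_leaves_colless:
  "n \<ge> 1 \<Longrightarrow> leaves (balanced_tree n) = n \<and> colless (balanced_tree n) = colless_bal n"
proof (induction n rule: less_induct)
  case (less n)
  show ?case
  proof (cases "n = 1")
    case True
    then show ?thesis by (simp add: balanced_tree.simps colless_bal.simps)
  next
    case False
    with less.prems have "n \<ge> 2" by simp
    then have "balanced_tree n = Node (balanced_tree ((n + 1) div 2)) (balanced_tree (n div 2))"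
      and "colless_bal n = colless_bal ((n + 1) div 2) + colless_bal (n div 2) + n mod 2"
      by (simp_all add: balanced_tree.simps colless_bal.simps)
    moreover have "(n + 1) div 2 + n div 2 = n" by presburger
    moreover have "(n + 1) div 2 = n div 2 + n mod 2" by presburger
    then have "nat \<bar>int ((n + 1) div 2) - int (n div 2)\<bar> = n mod 2" by simp
    moreover have "leaves (balanced_tree k) = k \<and> colless (balanced_tree k) = colless_bal k"
      if "k = (n + 1) div 2 \<or> k = n div 2" for k
      using less.IH that \<open>n \<ge> 2\<close> by auto
    ultimately show ?thesis by simp
  qed
qed

text \<open>The value \<open>-1\<close> at \<open>0\<close> makes the halving recursion hold at \<open>n = 1\<close> too.\<close>
definition cmin :: "nat \<Rightarrow> int" where
  "cmin n = (if n = 0 then -1 else int (colless_bal n))"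

lemma cmin_rec:
  assumes "n \<ge> 1"
  shows "cmin n = cmin ((n + 1) div 2) + cmin (n div 2) + int (n mod 2)"
proof (cases "n = 1")
  case False
  with assms have "n \<ge> 2" by simp
  then show ?thesis
    by (subst cmin_def, subst colless_bal.simps) (simp add: cmin_def)
qed (simp add: cmin_def colless_bal.simps)

lemma cmin_double: "p \<ge> 1 \<Longrightarrow> cmin (2 * p) = 2 * cmin p"
  using cmin_rec[of "2 * p"] by simp

lemma cmin_odd: "cmin (2 * p + 1) = cmin (p + 1) + cmin p + 1"
  using cmin_rec[of "2 * p + 1"] by simp

definition split_excess :: "nat \<Rightarrow> nat \<Rightarrow> int" where
  "split_excess a b = cmin a + cmin b + \<bar>int a - int b\<bar> - cmin (a + b)"

lemma split_excess_commute: "split_excess a b = split_excess b a"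
  unfolding split_excess_def by (simp add: add.commute abs_minus_commute)

lemma split_excess_0: "a \<ge> 1 \<Longrightarrow> split_excess a 0 = int a - 1"
  unfolding split_excess_def by (simp add: cmin_def)

lemma split_excess_diag: "a \<ge> 1 \<Longrightarrow> split_excess a a = 0"
  unfolding split_excess_def using cmin_double[of a] by (simp add: mult_2[symmetric])

lemma split_excess_Suc: "split_excess (b + 1) b = 0"
  unfolding split_excess_def using cmin_odd[of b] by (simp add: add.commute mult_2)

lemma split_excess_even_even:
  assumes "p \<ge> 1" "q \<ge> 1"
  shows "split_excess (2 * p) (2 * q) = 2 * split_excess p q"
proof -
  have sum: "2 * p + 2 * q = 2 * (p + q)" by simp
  have "cmin (2 * (p + q)) = 2 * cmin (p + q)" using assms by (intro cmin_double) simp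
  moreover have "\<bar>int (2 * p) - int (2 * q)\<bar> = 2 * \<bar>int p - int q\<bar>" by (simp add: abs_if)
  ultimately show ?thesis
    unfolding split_excess_def sum using assms by (simp add: cmin_double)
qed

lemma split_excess_odd_odd:
  "split_excess (2 * p + 1) (2 * q + 1)
     = split_excess (p + 1) q + split_excess p (q + 1) + (if p = q then 0 else 2)"
proof -
  have sums: "2 * p + 1 + (2 * q + 1) = 2 * (p + q + 1)" "p + 1 + q = p + q + 1"
    "p + (q + 1) = p + q + 1"
    by simp_all
  have "cmin (2 * (p + q + 1)) = 2 * cmin (p + q + 1)" by (intro cmin_double) simp
  then show ?thesis
    unfolding split_excess_def sums cmin_odd by (simp add: abs_if)
qed

lemma split_excess_odd_even:
  assumes "q \<ge> 1"
  shows "split_excess (2 * p + 1) (2 * q) = split_excess (p + 1) q + split_excess p q"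
proof -
  have sums: "2 * p + 1 + 2 * q = 2 * (p + q) + 1" "p + 1 + q = p + q + 1"
    by simp_all
  show ?thesis
    unfolding split_excess_def sums cmin_odd cmin_double[OF assms] by (simp add: abs_if)
qed

lemma split_excess_nonneg: "a + b \<ge> 1 \<Longrightarrow> split_excess a b \<ge> 0"
proof (induction "a + b" arbitrary: a b rule: less_induct)
  case less
  show ?case
  proof (cases "a = 0 \<or> b = 0")
    case True
    with less.prems show ?thesis
      using split_excess_0[of a] split_excess_0[of b] split_excess_commute[of a b] by auto
  next
    case False
    then show ?thesis
    proof (cases a b rule: parity_pair_cases)
      case (even_even p q)
      with False show ?thesis using less.hyps[of p q] split_excess_even_even[of p q] by auto
    next
      case (odd_odd p q)
      then show ?thesis
        using less.hyps[of "p + 1" q] less.hyps[of p "q + 1"] split_excess_odd_odd[of p q] by auto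
    next
      case (odd_even p q)
      with False show ?thesis
        using less.hyps[of "p + 1" q] less.hyps[of p q] split_excess_odd_even[of q p] by auto
    next
      case (even_odd p q)
      with False show ?thesis
        using less.hyps[of "q + 1" p] less.hyps[of q p] split_excess_odd_even[of p q]
          split_excess_commute[of a b] by auto
    qed
  qed
qed

lemma leaves_ge_1: "leaves t \<ge> 1"
  by (induction t) auto

lemma colless_bal_le_colless: "colless_bal (leaves t) \<le> colless t"
proof (induction t)
  case Leaf
  then show ?case by (simp add: colless_bal.simps)
next
  case (Node l r)
  have "split_excess (leaves l) (leaves r) \<ge> 0"
    using leaves_ge_1[of l] by (intro split_excess_nonneg) simp
  then have "colless_bal (leaves l + leaves r)
      \<le> colless_bal (leaves l) + colless_bal (leaves r) + nat \<bar>int (leaves l) - int (leaves r)\<bar>"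
    unfolding split_excess_def cmin_def using leaves_ge_1[of l] leaves_ge_1[of r] by simp
  with Node show ?case by simp
qed

lemma min_colless_eq_colless_bal: "n \<ge> 1 \<Longrightarrow> min_colless n = colless_bal n"
  unfolding min_colless_def
  using balanced_tree_leaves_colless colless_bal_le_colless
  by (intro Least_equality) blast+

lemma QB_eq_split_excess_0:
  "QB n = {(a, b). b \<le> a \<and> 1 \<le> b \<and> a + b = n \<and> split_excess a b = 0}"
proof -
  have "min_colless a + min_colless b + (a - b) = min_colless (a + b) \<longleftrightarrow> split_excess a b = 0"
    if "b \<le> a" "1 \<le> b" for a b
  proof -
    have "colless_bal a + colless_bal b + (a - b) = colless_bal (a + b)
        \<longleftrightarrow> int (colless_bal a + colless_bal b + (a - b)) = int (colless_bal (a + b))"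
      by (rule of_nat_eq_iff[symmetric])
    also have "\<dots> \<longleftrightarrow> split_excess a b = 0"
      using that unfolding split_excess_def cmin_def by auto
    finally show ?thesis
      using that by (simp add: min_colless_eq_colless_bal)
  qed
  then show ?thesis unfolding QB_def by auto
qed

section \<open>A dyadic criterion for optimal root splits\<close>

definition dyadic_small :: "nat \<Rightarrow> nat \<Rightarrow> bool" where
  "dyadic_small a b \<longleftrightarrow> (\<exists>t. 2 ^ t dvd b \<and> a - b \<le> 2 ^ t)"

definition dyadic_large :: "nat \<Rightarrow> nat \<Rightarrow> bool" where
  "dyadic_large a b \<longleftrightarrow> (\<exists>t. 2 ^ t dvd a \<and> a - b \<le> 2 ^ t \<and> 2 ^ (t + 1) \<le> a)"

definition dyadic_split :: "nat \<Rightarrow> nat \<Rightarrow> bool" where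
  "dyadic_split a b \<longleftrightarrow> dyadic_small a b \<or> dyadic_large a b"

lemma pow2_dvd_odd_imp_0: "2 ^ t dvd (n :: nat) \<Longrightarrow> odd n \<Longrightarrow> t = 0"
  by (cases t) auto

lemma pow2_dvd_imp_even: "2 ^ t dvd (n :: nat) \<Longrightarrow> t \<ge> 1 \<Longrightarrow> even n"
  by (cases t) auto

lemma dyadic_small_if_le_Suc: "a \<le> b + 1 \<Longrightarrow> dyadic_small a b"
  unfolding dyadic_small_def by (intro exI[of _ 0]) simp

lemma dyadic_split_if_le_Suc: "a \<le> b + 1 \<Longrightarrow> dyadic_split a b"
  unfolding dyadic_split_def using dyadic_small_if_le_Suc by blast

lemma dyadic_small_antimono: "a \<le> a' \<Longrightarrow> dyadic_small a' b \<Longrightarrow> dyadic_small a b"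
  unfolding dyadic_small_def by fastforce

lemma dyadic_large_mono: "b \<le> b' \<Longrightarrow> dyadic_large a b \<Longrightarrow> dyadic_large a b'"
  unfolding dyadic_large_def by fastforce

lemma dyadic_large_imp_pos:
  assumes "dyadic_large a b"
  shows "b \<ge> 1"
proof -
  obtain t where "a - b \<le> 2 ^ t" "2 * 2 ^ t \<le> a"
    using assms unfolding dyadic_large_def by auto
  moreover have "(1 :: nat) \<le> 2 ^ t" by simp
  ultimately show ?thesis by linarith
qed

lemma dyadic_small_double_iff: "dyadic_small (2 * p) (2 * q) \<longleftrightarrow> dyadic_small p q"
proof
  assume "dyadic_small (2 * p) (2 * q)"
  then obtain t where t: "2 ^ t dvd 2 * q" "2 * p - 2 * q \<le> 2 ^ t"
    unfolding dyadic_small_def by blast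
  show "dyadic_small p q"
  proof (cases t)
    case 0
    with t show ?thesis by (intro dyadic_small_if_le_Suc) simp
  next
    case (Suc t')
    with t show ?thesis unfolding dyadic_small_def by (intro exI[of _ t']) simp
  qed
next
  assume "dyadic_small p q"
  then obtain t where "2 ^ t dvd q" "p - q \<le> 2 ^ t"
    unfolding dyadic_small_def by blast
  then show "dyadic_small (2 * p) (2 * q)"
    unfolding dyadic_small_def by (intro exI[of _ "Suc t"]) simp
qed

lemma dyadic_large_double_iff:
  assumes "q < p"
  shows "dyadic_large (2 * p) (2 * q) \<longleftrightarrow> dyadic_large p q"
proof
  assume "dyadic_large (2 * p) (2 * q)"
  then obtain t where t: "2 ^ t dvd 2 * p" "2 * p - 2 * q \<le> 2 ^ t" "2 ^ (t + 1) \<le> 2 * p"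
    unfolding dyadic_large_def by blast
  with assms obtain t' where "t = Suc t'" by (cases t) auto
  with t show "dyadic_large p q" unfolding dyadic_large_def by (intro exI[of _ t']) simp
next
  assume "dyadic_large p q"
  then obtain t where "2 ^ t dvd p" "p - q \<le> 2 ^ t" "2 ^ (t + 1) \<le> p"
    unfolding dyadic_large_def by blast
  then show "dyadic_large (2 * p) (2 * q)"
    unfolding dyadic_large_def by (intro exI[of _ "Suc t"]) simp
qed

lemma dyadic_split_double_iff: "dyadic_split (2 * p) (2 * q) \<longleftrightarrow> dyadic_split p q"
proof (cases "p \<le> q")
  case True
  then show ?thesis using dyadic_split_if_le_Suc by simp
next
  case False
  then show ?thesis
    unfolding dyadic_split_def by (simp add: dyadic_small_double_iff dyadic_large_double_iff)
qed

lemma dyadic_split_odd_odd_iff: "dyadic_split (2 * p + 1) (2 * q + 1) \<longleftrightarrow> p \<le> q"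
proof
  assume "dyadic_split (2 * p + 1) (2 * q + 1)"
  then obtain t where "2 ^ t dvd 2 * p + 1 \<or> 2 ^ t dvd 2 * q + 1" "2 * p + 1 - (2 * q + 1) \<le> 2 ^ t"
    unfolding dyadic_split_def dyadic_small_def dyadic_large_def by blast
  then show "p \<le> q" using pow2_dvd_odd_imp_0[of t] by fastforce
qed (simp add: dyadic_split_if_le_Suc)

lemma dyadic_split_odd_even_iff:
  assumes "q < p"
  shows "dyadic_split (2 * p + 1) (2 * q) \<longleftrightarrow> dyadic_small (p + 1) q"
proof
  assume "dyadic_split (2 * p + 1) (2 * q)"
  then consider (small) t where "2 ^ t dvd 2 * q" "2 * p + 1 - 2 * q \<le> 2 ^ t"
    | (large) t where "2 ^ t dvd 2 * p + 1" "2 * p + 1 - 2 * q \<le> 2 ^ t"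
    unfolding dyadic_split_def dyadic_small_def dyadic_large_def by blast
  then show "dyadic_small (p + 1) q"
  proof cases
    case small
    with assms obtain t' where "t = Suc t'" by (cases t) auto
    with small show ?thesis unfolding dyadic_small_def by (intro exI[of _ t']) simp
  next
    case large
    with assms show ?thesis using pow2_dvd_odd_imp_0[of t "2 * p + 1"] by simp
  qed
next
  assume "dyadic_small (p + 1) q"
  then obtain t where "2 ^ t dvd q" "p + 1 - q \<le> 2 ^ t"
    unfolding dyadic_small_def by blast
  then show "dyadic_split (2 * p + 1) (2 * q)"
    unfolding dyadic_split_def dyadic_small_def by (intro disjI1 exI[of _ "Suc t"]) simp
qed

lemma dyadic_split_even_odd_iff:
  assumes "q + 2 \<le> p"
  shows "dyadic_split (2 * p) (2 * q + 1) \<longleftrightarrow> dyadic_large p q"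
proof
  assume "dyadic_split (2 * p) (2 * q + 1)"
  then consider (small) t where "2 ^ t dvd 2 * q + 1" "2 * p - (2 * q + 1) \<le> 2 ^ t"
    | (large) t where "2 ^ t dvd 2 * p" "2 * p - (2 * q + 1) \<le> 2 ^ t" "2 ^ (t + 1) \<le> 2 * p"
    unfolding dyadic_split_def dyadic_small_def dyadic_large_def by blast
  then show "dyadic_large p q"
  proof cases
    case small
    with assms show ?thesis using pow2_dvd_odd_imp_0[of t "2 * q + 1"] by simp
  next
    case large
    with assms obtain t' where "t = Suc t'" by (cases t) auto
    with large show ?thesis unfolding dyadic_large_def by (intro exI[of _ t']) simp
  qed
next
  assume "dyadic_large p q"
  then obtain t where "2 ^ t dvd p" "p - q \<le> 2 ^ t" "2 ^ (t + 1) \<le> p"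
    unfolding dyadic_large_def by blast
  then show "dyadic_split (2 * p) (2 * q + 1)"
    unfolding dyadic_split_def dyadic_large_def by (intro disjI2 exI[of _ "Suc t"]) simp
qed

lemma dyadic_small_Suc_if_dyadic_split:
  assumes "q < p" "dyadic_split (p + 1) q" "dyadic_split p q"
  shows "dyadic_small (p + 1) q"
proof (cases "dyadic_small (p + 1) q")
  case False
  with assms(2) obtain t where t: "2 ^ t dvd p + 1" "p + 1 - q \<le> 2 ^ t"
    unfolding dyadic_split_def dyadic_large_def by blast
  with assms(1) have "t \<ge> 1" by (cases t) auto
  with t have "even (p + 1)" using pow2_dvd_imp_even by blast
  then have "odd p" by simp
  have "p = q + 1"
  proof -
    from assms(3) consider (small) u where "2 ^ u dvd q" "p - q \<le> 2 ^ u"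
      | (large) u where "2 ^ u dvd p" "p - q \<le> 2 ^ u"
      unfolding dyadic_split_def dyadic_small_def dyadic_large_def by blast
    then show ?thesis
    proof cases
      case small
      have "p - q = 2 ^ u"
      proof (rule ccontr)
        assume "p - q \<noteq> 2 ^ u"
        with small have "dyadic_small (p + 1) q" unfolding dyadic_small_def by (intro exI[of _ u]) auto
        with False show False ..
      qed
      moreover have "u = 0"
      proof (rule ccontr)
        assume "u \<noteq> 0"
        with small have "even q" "even ((2 :: nat) ^ u)" using pow2_dvd_imp_even by auto
        moreover have "p = q + 2 ^ u" using \<open>p - q = 2 ^ u\<close> assms(1) by simp
        ultimately show False using \<open>odd p\<close> by simp
      qed
      ultimately show ?thesis using assms(1) by simp
    next
      case large
      with \<open>odd p\<close> have "u = 0" using pow2_dvd_odd_imp_0 by blast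
      with large assms(1) show ?thesis by simp
    qed
  qed
  with \<open>odd p\<close> have "2 ^ 1 dvd q" "p + 1 - q \<le> 2 ^ 1" by auto
  then show ?thesis unfolding dyadic_small_def by blast
qed

lemma dyadic_large_if_dyadic_split_Suc:
  assumes "q + 2 \<le> p" "q \<ge> 1" "dyadic_split p (q + 1)" "dyadic_split p q"
  shows "dyadic_large p q"
proof (cases "dyadic_large p q")
  case False
  with assms(4) obtain t where t: "2 ^ t dvd q" "p - q \<le> 2 ^ t"
    unfolding dyadic_split_def dyadic_small_def by blast
  with assms(1) have "t \<ge> 1" by (cases t) auto
  with t have "even q" using pow2_dvd_imp_even by blast
  have "p = q + 2"
  proof -
    from assms(3) consider (small) u where "2 ^ u dvd q + 1" "p - (q + 1) \<le> 2 ^ u"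
      | (large) u where "2 ^ u dvd p" "p - (q + 1) \<le> 2 ^ u" "2 ^ (u + 1) \<le> p"
      unfolding dyadic_split_def dyadic_small_def dyadic_large_def by blast
    then show ?thesis
    proof cases
      case small
      have "odd (q + 1)" using \<open>even q\<close> by simp
      with small have "u = 0" using pow2_dvd_odd_imp_0 by blast
      with small assms(1) show ?thesis by simp
    next
      case large
      have "p - (q + 1) = 2 ^ u"
      proof (rule ccontr)
        assume "p - (q + 1) \<noteq> 2 ^ u"
        with large have "dyadic_large p q" unfolding dyadic_large_def by (intro exI[of _ u]) auto
        with False show False ..
      qed
      moreover have "u = 0"
      proof (rule ccontr)
        assume "u \<noteq> 0"
        with large have "even p" "even ((2 :: nat) ^ u)" using pow2_dvd_imp_even by auto
        moreover have "p = q + 1 + 2 ^ u" using \<open>p - (q + 1) = 2 ^ u\<close> assms(1) by simp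
        ultimately show False using \<open>even q\<close> by simp
      qed
      ultimately show ?thesis using assms(1) by simp
    qed
  qed
  moreover from \<open>even q\<close> assms(2) have "q \<ge> 2" by presburger
  ultimately have "2 ^ 1 dvd p" "p - q \<le> 2 ^ 1" "2 ^ (1 + 1) \<le> p" using \<open>even q\<close> by auto
  then show ?thesis unfolding dyadic_large_def by blast
qed

lemma split_excess_odd_even_eq_0_iff:
  assumes q: "1 \<le> q" "q < p"
    and IH: "split_excess (p + 1) q = 0 \<longleftrightarrow> dyadic_split (p + 1) q"
      "split_excess p q = 0 \<longleftrightarrow> dyadic_split p q"
  shows "split_excess (2 * p + 1) (2 * q) = 0 \<longleftrightarrow> dyadic_split (2 * p + 1) (2 * q)"
proof -
  have "split_excess (p + 1) q \<ge> 0" "split_excess p q \<ge> 0"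
    using q by (auto intro: split_excess_nonneg)
  then have "split_excess (2 * p + 1) (2 * q) = 0
      \<longleftrightarrow> split_excess (p + 1) q = 0 \<and> split_excess p q = 0"
    using split_excess_odd_even[OF q(1)] by auto
  also have "\<dots> \<longleftrightarrow> dyadic_split (p + 1) q \<and> dyadic_split p q"
    using IH by simp
  also have "\<dots> \<longleftrightarrow> dyadic_small (p + 1) q"
    using dyadic_small_Suc_if_dyadic_split[OF q(2)] dyadic_small_antimono[of p "p + 1" q]
    unfolding dyadic_split_def by auto
  also have "\<dots> \<longleftrightarrow> dyadic_split (2 * p + 1) (2 * q)"
    using dyadic_split_odd_even_iff[OF q(2)] by simp
  finally show ?thesis .
qed

lemma split_excess_even_odd_eq_0_iff:
  assumes q: "q + 2 \<le> p"
    and IH: "1 \<le> q \<Longrightarrow> split_excess p (q + 1) = 0 \<longleftrightarrow> dyadic_split p (q + 1)"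
      "1 \<le> q \<Longrightarrow> split_excess p q = 0 \<longleftrightarrow> dyadic_split p q"
  shows "split_excess (2 * p) (2 * q + 1) = 0 \<longleftrightarrow> dyadic_split (2 * p) (2 * q + 1)"
proof -
  have "split_excess (2 * p) (2 * q + 1) = split_excess (q + 1) p + split_excess q p"
    using q split_excess_commute[of "2 * p"] split_excess_odd_even[of p q] by simp
  then have excess: "split_excess (2 * p) (2 * q + 1) = split_excess p (q + 1) + split_excess p q"
    using split_excess_commute by simp
  have nonneg: "split_excess p (q + 1) \<ge> 0" "split_excess p q \<ge> 0"
    using q by (auto intro: split_excess_nonneg)
  show ?thesis
  proof (cases "q = 0")
    case True
    then show ?thesis
      using excess nonneg split_excess_0[of p] q dyadic_split_even_odd_iff[OF q]
        dyadic_large_imp_pos by auto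
  next
    case False
    then have "split_excess (2 * p) (2 * q + 1) = 0
        \<longleftrightarrow> dyadic_split p (q + 1) \<and> dyadic_split p q"
      using excess nonneg IH by auto
    also have "\<dots> \<longleftrightarrow> dyadic_large p q"
      using dyadic_large_if_dyadic_split_Suc[OF q] False dyadic_large_mono[of q "q + 1" p]
      unfolding dyadic_split_def by auto
    finally show ?thesis using dyadic_split_even_odd_iff[OF q] by simp
  qed
qed

lemma split_excess_eq_0_iff:
  "b \<le> a \<Longrightarrow> 1 \<le> b \<Longrightarrow> split_excess a b = 0 \<longleftrightarrow> dyadic_split a b"
proof (induction "a + b" arbitrary: a b rule: less_induct)
  case less
  show ?case
  proof (cases "a \<le> b + 1")
    case True
    with less.prems have "a = b \<or> a = b + 1" by auto
    with True show ?thesis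
      using split_excess_diag[of b] split_excess_Suc[of b] dyadic_split_if_le_Suc less.prems
      by auto
  next
    case False
    then show ?thesis
    proof (cases a b rule: parity_pair_cases)
      case (even_even p q)
      with less.prems have "1 \<le> q" "q \<le> p" by auto
      with even_even show ?thesis
        using less.hyps[of p q] split_excess_even_even[of p q] dyadic_split_double_iff by auto
    next
      case (odd_odd p q)
      with False have "p \<noteq> q" "\<not> dyadic_split a b" using dyadic_split_odd_odd_iff by auto
      moreover have "split_excess (p + 1) q \<ge> 0" "split_excess p (q + 1) \<ge> 0"
        by (auto intro: split_excess_nonneg)
      ultimately show ?thesis using odd_odd split_excess_odd_odd[of p q] by auto
    next
      case (odd_even p q)
      with False less.prems have "1 \<le> q" "q < p" by auto
      with odd_even show ?thesis
        using less.hyps[of "p + 1" q] less.hyps[of p q] split_excess_odd_even_eq_0_iff by simp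
    next
      case (even_odd p q)
      with False have "q + 2 \<le> p" by simp
      with even_odd show ?thesis
        using less.hyps[of p "q + 1"] less.hyps[of p q] split_excess_even_odd_eq_0_iff by simp
    qed
  qed
qed

lemma QB_eq_dyadic_split: "QB n = {(a, b). b \<le> a \<and> 1 \<le> b \<and> a + b = n \<and> dyadic_split a b}"
  unfolding QB_eq_split_excess_0 using split_excess_eq_0_iff by auto

lemma QB_1: "QB 1 = {}"
  unfolding QB_eq_dyadic_split by auto

section \<open>Multiplying by powers of two\<close>

lemma QB_double:
  assumes "m \<ge> 1"
  shows "QB (2 * m) = insert (m, m) (map_prod ((*) 2) ((*) 2) ` QB m)"
proof (intro set_eqI iffI)
  fix x
  assume "x \<in> QB (2 * m)"
  then obtain a b where x: "x = (a, b)"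
    and ab: "b \<le> a" "1 \<le> b" "a + b = 2 * m" "split_excess a b = 0"
    unfolding QB_eq_split_excess_0 by blast
  show "x \<in> insert (m, m) (map_prod ((*) 2) ((*) 2) ` QB m)"
  proof (cases a b rule: parity_pair_cases)
    case (even_even p q)
    with ab have "(p, q) \<in> QB m"
      unfolding QB_eq_split_excess_0 using split_excess_even_even[of p q] by auto
    with x even_even show ?thesis by force
  next
    case (odd_odd p q)
    have "split_excess (p + 1) q \<ge> 0" "split_excess p (q + 1) \<ge> 0"
      by (auto intro: split_excess_nonneg)
    with ab odd_odd have "p = q" using split_excess_odd_odd[of p q] by (auto split: if_splits)
    with x ab odd_odd show ?thesis by simp
  qed (use ab in presburger)+
next
  fix x
  assume "x \<in> insert (m, m) (map_prod ((*) 2) ((*) 2) ` QB m)"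
  with assms show "x \<in> QB (2 * m)"
    unfolding QB_eq_split_excess_0 using split_excess_diag split_excess_even_even by auto
qed

lemma QB_pow2_mult:
  assumes "n0 \<ge> 1"
  shows "QB (2 ^ k * n0) = (if k \<ge> 1 then {(2 ^ k * n0 div 2, 2 ^ k * n0 div 2)} else {})
           \<union> map_prod ((*) (2 ^ k)) ((*) (2 ^ k)) ` QB n0"
proof (induction k)
  case 0
  then show ?case by (simp add: prod.map_id0)
next
  case (Suc k)
  have "QB (2 ^ Suc k * n0) = insert (2 ^ k * n0, 2 ^ k * n0)
      (map_prod ((*) 2) ((*) 2) ` QB (2 ^ k * n0))"
    using assms QB_double[of "2 ^ k * n0"] by (simp add: mult.assoc)
  also have "\<dots> = insert (2 ^ k * n0, 2 ^ k * n0)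
      (map_prod ((*) (2 ^ Suc k)) ((*) (2 ^ Suc k)) ` QB n0)"
  proof -
    have "map_prod ((*) 2) ((*) 2) ` map_prod ((*) (2 ^ k)) ((*) (2 ^ k)) ` QB n0
        = map_prod ((*) (2 ^ Suc k)) ((*) (2 ^ Suc k)) ` QB n0"
      unfolding image_image by (rule image_cong) auto
    moreover have "2 * (2 ^ k * n0 div 2) = 2 ^ k * n0" if "k \<ge> 1"
      using that by (cases k) auto
    ultimately show ?thesis unfolding Suc.IH image_Un by auto
  qed
  finally show ?case by simp
qed

section \<open>Binary expansions\<close>

lemma dvd_add_mod_eq: "(M :: nat) dvd x \<Longrightarrow> r < M \<Longrightarrow> (x + r) mod M = r"
  by (auto elim!: dvdE)

text \<open>\<open>N\<close> is the odd part \<open>n\<^sub>0\<close> of the statement, written in binary with exponents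
  \<open>m 1 > \<dots> > m l = 0\<close>; \<open>half_head\<close> is the sum \<open>s\<close> of the statement.\<close>
locale binary_expansion =
  fixes m :: "nat \<Rightarrow> nat" and l :: nat
  assumes exponent_decr: "\<And>i. 1 \<le> i \<Longrightarrow> i < l \<Longrightarrow> m (Suc i) < m i"
    and exponent_last: "m l = 0"
    and length_pos: "1 \<le> l"
begin

abbreviation N :: nat where
  "N \<equiv> \<Sum>i=1..l. 2 ^ m i"

definition head :: "nat \<Rightarrow> nat" where
  "head j = (\<Sum>i=1..<j. 2 ^ m i)"

definition tail :: "nat \<Rightarrow> nat" where
  "tail j = (\<Sum>i=j..l. 2 ^ m i)"

definition half_head :: "nat \<Rightarrow> nat" where
  "half_head j = (\<Sum>i=1..<j. 2 ^ (m i - 1))"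

lemma exponent_decr_le:
  assumes "1 \<le> i" "i \<le> i'" "i' \<le> l"
  shows "m i' + (i' - i) \<le> m i"
  using assms(2,3)
proof (induction i' rule: dec_induct)
  case (step k)
  with assms(1) have "m (Suc k) < m k" by (intro exponent_decr) auto
  with step show ?case by simp
qed simp

lemma exponent_pos: "1 \<le> i \<Longrightarrow> i < l \<Longrightarrow> 1 \<le> m i"
  using exponent_decr_le[of i l] exponent_last by simp

lemma exponent_inj: "inj_on m {1..l}"
proof (rule inj_onI, rule ccontr)
  fix i j
  assume ij: "i \<in> {1..l}" "j \<in> {1..l}" "m i = m j" "i \<noteq> j"
  then consider "i < j" | "j < i" by linarith
  then show False
  proof cases
    case 1
    with ij have "m j + (j - i) \<le> m i" by (intro exponent_decr_le) auto
    with 1 ij(3) show False by simp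
  next
    case 2
    with ij have "m i + (i - j) \<le> m j" by (intro exponent_decr_le) auto
    with 2 ij(3) show False by simp
  qed
qed

lemma head_add_tail:
  assumes "1 \<le> j" "j \<le> l + 1"
  shows "head j + tail j = N"
proof -
  have "head j + tail j = (\<Sum>i=1..<j. 2 ^ m i) + (\<Sum>i=j..<Suc l. 2 ^ m i)"
    unfolding head_def tail_def by (simp add: atLeastLessThanSuc_atLeastAtMost)
  also have "\<dots> = (\<Sum>i=1..<Suc l. 2 ^ m i)"
    using assms by (intro sum.atLeastLessThan_concat) auto
  finally show ?thesis by (simp add: atLeastLessThanSuc_atLeastAtMost)
qed

lemma double_half_head: "j \<le> l \<Longrightarrow> 2 * half_head j = head j"
  unfolding half_head_def head_def sum_distrib_left
proof (rule sum.cong)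
  fix i
  assume "j \<le> l" "i \<in> {1..<j}"
  then have "1 \<le> m i" by (intro exponent_pos) auto
  then show "2 * 2 ^ (m i - 1) = (2 :: nat) ^ m i"
    by (metis Suc_diff_le diff_Suc_1 power_Suc)
qed simp

lemma tail_Suc: "1 \<le> j \<Longrightarrow> j \<le> l \<Longrightarrow> tail j = 2 ^ m j + tail (Suc j)"
  unfolding tail_def by (simp add: sum.atLeast_Suc_atMost)

lemma tail_last: "tail l = 1"
  unfolding tail_def using exponent_last by simp

lemma tail_less: "1 \<le> j \<Longrightarrow> j \<le> l \<Longrightarrow> tail j < 2 ^ (m j + 1)"
proof (induction "l - j" arbitrary: j)
  case 0
  then have "j = l" by simp
  then show ?case using tail_last exponent_last by simp
next
  case (Suc d)
  then have "j < l" by simp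
  with Suc have "tail (Suc j) < 2 ^ (m (Suc j) + 1)" by simp
  also have "\<dots> \<le> 2 ^ m j"
    using \<open>j < l\<close> Suc.prems exponent_decr[of j] by (intro power_increasing) auto
  finally show ?case using tail_Suc[of j] Suc by simp
qed

lemma pow_le_tail: "1 \<le> j \<Longrightarrow> j \<le> l \<Longrightarrow> 2 ^ m j \<le> tail j"
  using tail_Suc by simp

lemma pow_less_tail:
  assumes "1 \<le> j" "j < l"
  shows "2 ^ m j < tail j"
proof -
  have "0 < (2 :: nat) ^ m (Suc j)" by simp
  also have "\<dots> \<le> tail (Suc j)" using assms by (intro pow_le_tail) auto
  finally show ?thesis using tail_Suc[of j] assms by simp
qed

lemma pow_dvd_head: "(\<And>i. 1 \<le> i \<Longrightarrow> i < j \<Longrightarrow> T \<le> m i) \<Longrightarrow> 2 ^ T dvd head j"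
  unfolding head_def by (intro dvd_sum) (simp add: le_imp_power_dvd)

lemma pow_dvd_half_head: "(\<And>i. 1 \<le> i \<Longrightarrow> i < j \<Longrightarrow> T < m i) \<Longrightarrow> 2 ^ T dvd half_head j"
  unfolding half_head_def by (intro dvd_sum le_imp_power_dvd) fastforce

lemma half_head_ge: "2 \<le> j \<Longrightarrow> 2 ^ (m 1 - 1) \<le> half_head j"
  unfolding half_head_def by (rule member_le_sum) auto

lemma cut_below_level:
  assumes "1 \<le> T"
  obtains j where "1 \<le> j" "j \<le> l" "m j < T" "\<And>i. 1 \<le> i \<Longrightarrow> i < j \<Longrightarrow> T \<le> m i"
    "tail j = N mod 2 ^ T" "head j = N - N mod 2 ^ T"
proof -
  define j where "j = (LEAST j. 1 \<le> j \<and> j \<le> l \<and> m j < T)"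
  have "1 \<le> l \<and> l \<le> l \<and> m l < T" using assms length_pos exponent_last by simp
  then have j: "1 \<le> j" "j \<le> l" "m j < T"
    unfolding j_def by (metis (mono_tags, lifting) LeastI)+
  have before: "T \<le> m i" if "1 \<le> i" "i < j" for i
    using not_less_Least[of i "\<lambda>j. 1 \<le> j \<and> j \<le> l \<and> m j < T"] that j unfolding j_def by auto
  have "2 ^ T dvd head j" using before by (rule pow_dvd_head)
  moreover have "tail j < 2 ^ T"
    using tail_less[OF j(1,2)] power_increasing[of "m j + 1" T "2 :: nat"] j(3) by simp
  moreover have "head j + tail j = N" using j by (intro head_add_tail) auto
  ultimately have "tail j = N mod 2 ^ T" by (metis dvd_add_mod_eq)
  moreover have "head j = N - N mod 2 ^ T"
    using \<open>head j + tail j = N\<close> calculation by simp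
  ultimately show ?thesis using that j before by blast
qed

lemma N_eq_half_head_tail: "1 \<le> j \<Longrightarrow> j \<le> l \<Longrightarrow> N = 2 * half_head j + tail j"
  using head_add_tail[of j] double_half_head[of j] by simp

lemma N_eq_half_head_last: "N = 2 * half_head l + 1"
  using N_eq_half_head_tail[of l] length_pos tail_last by simp

lemma odd_N: "odd N"
  using N_eq_half_head_last by simp

lemma half_head_pos:
  assumes "2 \<le> j"
  shows "1 \<le> half_head j"
proof -
  have "(1 :: nat) \<le> 2 ^ (m 1 - 1)" by simp
  also have "\<dots> \<le> half_head j" using assms by (rule half_head_ge)
  finally show ?thesis .
qed

lemma head_1: "head 1 = 0"
  unfolding head_def by simp

end

section \<open>Optimal splits of odd numbers\<close>

locale nontrivial_binary_expansion = binary_expansion +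
  assumes two_le_length: "2 \<le> l"
begin

definition qb_labels :: "qb_label set" where
  "qb_labels = {B1}
     \<union> {B2 j | j. j \<in> {2..l-1} \<and> m j > m (Suc j) + 1}
     \<union> {B3 j | j. j \<in> {2..l-1} \<and> m j + 1 < m (j - 1)}"

text \<open>\<open>B4\<close> labels the split \<open>(n/2, n/2)\<close> of an even \<open>n\<close>.\<close>
definition qb_pair :: "qb_label \<Rightarrow> nat \<times> nat" where
  "qb_pair lab = (case lab of
      B1 \<Rightarrow> (half_head l + 1, half_head l)
    | B2 j \<Rightarrow> (half_head j + 2 ^ m j, N - (half_head j + 2 ^ m j))
    | B3 j \<Rightarrow> (N - half_head j, half_head j)
    | B4 \<Rightarrow> undefined)"

lemma qb_labels_cases:
  assumes "lab \<in> qb_labels"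
  obtains (B1) "lab = B1"
  | (B2) j where "lab = B2 j" "2 \<le> j" "j < l" "m (Suc j) + 1 < m j"
  | (B3) j where "lab = B3 j" "2 \<le> j" "j < l" "m j + 1 < m (j - 1)"
  using assms two_le_length unfolding qb_labels_def by fastforce

lemma B2_in_qb_labels: "2 \<le> j \<Longrightarrow> j < l \<Longrightarrow> m (Suc j) + 1 < m j \<Longrightarrow> B2 j \<in> qb_labels"
  unfolding qb_labels_def by auto

lemma B3_in_qb_labels: "2 \<le> j \<Longrightarrow> j < l \<Longrightarrow> m j + 1 < m (j - 1) \<Longrightarrow> B3 j \<in> qb_labels"
  unfolding qb_labels_def by auto

lemma qb_pair_B1_in_QB: "qb_pair B1 \<in> QB N"
  unfolding qb_pair_def QB_eq_dyadic_split
  using N_eq_half_head_last half_head_pos[OF two_le_length] dyadic_split_if_le_Suc by simp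

lemma qb_pair_B2_in_QB:
  assumes "2 \<le> j" "j < l" "m (Suc j) + 1 < m j"
  shows "qb_pair (B2 j) \<in> QB N"
proof -
  let ?a = "half_head j + 2 ^ m j"
  have N: "N = 2 * half_head j + 2 ^ m j + tail (Suc j)"
    using N_eq_half_head_tail[of j] tail_Suc[of j] assms by simp
  have "tail (Suc j) < 2 ^ (m (Suc j) + 1)" using assms by (intro tail_less) auto
  also have "\<dots> \<le> 2 ^ m j" using assms(3) by (intro power_increasing) auto
  finally have tail_less_pow: "tail (Suc j) < 2 ^ m j" .
  have "2 ^ m j dvd half_head j"
  proof (rule pow_dvd_half_head)
    fix i
    assume "1 \<le> i" "i < j"
    with assms have "m j + (j - i) \<le> m i" by (intro exponent_decr_le) auto
    with \<open>i < j\<close> show "m j < m i" by linarith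
  qed
  then have dvd_a: "2 ^ m j dvd ?a" by simp
  have "m j + (j - 1) \<le> m 1" using assms by (intro exponent_decr_le) auto
  then have "(2 :: nat) ^ m j \<le> 2 ^ (m 1 - 1)" using assms(1) by (intro power_increasing) auto
  also have "\<dots> \<le> half_head j" using assms(1) by (rule half_head_ge)
  finally have "2 ^ (m j + 1) \<le> ?a" by simp
  moreover have "?a - (N - ?a) \<le> 2 ^ m j" using N by simp
  ultimately have "dyadic_large ?a (N - ?a)" unfolding dyadic_large_def using dvd_a by blast
  moreover have "1 \<le> N - ?a" using N half_head_pos[OF assms(1)] by simp
  ultimately show ?thesis
    unfolding qb_pair_def QB_eq_dyadic_split dyadic_split_def using N tail_less_pow by auto
qed

lemma qb_pair_B3_in_QB:
  assumes "2 \<le> j" "j < l" "m j + 1 < m (j - 1)"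
  shows "qb_pair (B3 j) \<in> QB N"
proof -
  let ?t = "m (j - 1) - 1"
  have N: "N = 2 * half_head j + tail j" using assms by (intro N_eq_half_head_tail) auto
  have "2 ^ ?t dvd half_head j"
  proof (rule pow_dvd_half_head)
    fix i
    assume "1 \<le> i" "i < j"
    with assms have "m (j - 1) + (j - 1 - i) \<le> m i" by (intro exponent_decr_le) auto
    with assms(3) show "?t < m i" by linarith
  qed
  moreover have "tail j < 2 ^ (m j + 1)" using assms by (intro tail_less) auto
  moreover have "(2 :: nat) ^ (m j + 1) \<le> 2 ^ ?t" using assms(3) by (intro power_increasing) auto
  ultimately have "dyadic_small (N - half_head j) (half_head j)"
    unfolding dyadic_small_def using N by (intro exI[of _ ?t]) auto
  then show ?thesis
    unfolding qb_pair_def QB_eq_dyadic_split dyadic_split_def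
    using N half_head_pos[OF assms(1)] by auto
qed

lemma qb_pair_in_QB:
  assumes "lab \<in> qb_labels"
  shows "qb_pair lab \<in> QB N"
  using assms
proof (cases rule: qb_labels_cases)
  case B1
  then show ?thesis using qb_pair_B1_in_QB by simp
next
  case (B2 j)
  then show ?thesis using qb_pair_B2_in_QB by simp
next
  case (B3 j)
  then show ?thesis using qb_pair_B3_in_QB by simp
qed

lemma QB_dyadic_small_imp_B3:
  assumes "b + 2 \<le> a" "a + b = N" "1 \<le> b" "dyadic_small a b"
  obtains j where "2 \<le> j" "j < l" "m j + 1 < m (j - 1)" "(a, b) = qb_pair (B3 j)"
proof -
  obtain t where t: "2 ^ t dvd b" "a - b \<le> 2 ^ t"
    using assms(4) unfolding dyadic_small_def by blast
  obtain j where j: "1 \<le> j" "j \<le> l" "\<And>i. 1 \<le> i \<Longrightarrow> i < j \<Longrightarrow> Suc t \<le> m i"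
    and cut: "tail j = N mod 2 ^ Suc t" "head j = N - N mod 2 ^ Suc t"
    using cut_below_level[of "Suc t"] by auto
  have "(2 :: nat) ^ t < 2 ^ Suc t" by simp
  with t(2) have "a - b < 2 ^ Suc t" by linarith
  moreover have "2 ^ Suc t dvd 2 * b" using t(1) by simp
  moreover have "N = 2 * b + (a - b)" using assms(1,2) by simp
  ultimately have "N mod 2 ^ Suc t = a - b" by (simp add: dvd_add_mod_eq)
  with cut have tail_j: "tail j = a - b" and "head j = 2 * b" using \<open>N = 2 * b + (a - b)\<close> by simp_all
  then have b: "b = half_head j" using double_half_head[OF j(2)] by simp
  have "j \<noteq> 1" using \<open>head j = 2 * b\<close> head_1 assms(3) by auto
  moreover have "j \<noteq> l" using tail_j tail_last assms(1) by auto
  ultimately have j_bounds: "2 \<le> j" "j < l" using j(1,2) by auto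
  have "(2 :: nat) ^ m j < 2 ^ t"
    using pow_less_tail[of j] j_bounds tail_j t(2) by (simp add: order_less_le_trans)
  then have "m j < t" by simp
  moreover have "Suc t \<le> m (j - 1)" using j(3)[of "j - 1"] j_bounds by simp
  ultimately have "m j + 1 < m (j - 1)" by simp
  moreover have "(a, b) = qb_pair (B3 j)" unfolding qb_pair_def using b assms(2) by auto
  ultimately show ?thesis using that j_bounds by blast
qed

lemma dyadic_large_cut:
  assumes "b + 2 \<le> a" "a + b = N" "2 ^ t dvd a" "a - b \<le> 2 ^ t" "2 ^ (t + 1) \<le> a"
  obtains j where "2 \<le> j" "j < l" "m j = t" "tail j = 2 ^ Suc t - (a - b)"
    "a = half_head j + 2 ^ t"
proof -
  from assms(1,4) have "t \<ge> 1" by (cases t) auto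
  obtain j where j: "1 \<le> j" "j \<le> l" "m j < Suc t"
    and cut: "tail j = N mod 2 ^ Suc t" "head j = N - N mod 2 ^ Suc t"
    using cut_below_level[of "Suc t"] by auto
  have pow_Suc: "(2 :: nat) ^ Suc t = 2 * 2 ^ t" by simp
  have "N = (2 * a - 2 ^ Suc t) + (2 ^ Suc t - (a - b))" using assms by auto
  moreover have "2 ^ Suc t dvd 2 * a - 2 ^ Suc t" using assms(3) by (intro dvd_diff_nat) auto
  moreover have "2 ^ Suc t - (a - b) < 2 ^ Suc t" using assms(1) by (intro diff_less) auto
  ultimately have tail_j: "tail j = 2 ^ Suc t - (a - b)" and head_j: "head j = 2 * a - 2 ^ Suc t"
    using cut by (simp_all add: dvd_add_mod_eq)
  have "2 ^ t \<le> tail j" using tail_j assms(4) pow_Suc by linarith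
  also have "\<dots> < 2 ^ (m j + 1)" using j by (intro tail_less) auto
  finally have "t < m j + 1" by (rule power_less_imp_less_exp[rotated]) simp
  with j(3) have mj: "m j = t" by simp
  with \<open>t \<ge> 1\<close> exponent_last have "j \<noteq> l" by auto
  moreover have "j \<noteq> 1"
  proof
    assume "j = 1"
    with head_j head_1 pow_Suc have "a \<le> 2 ^ t" by simp
    moreover have "2 * 2 ^ t \<le> a" using assms(5) by simp
    moreover have "(0 :: nat) < 2 ^ t" by simp
    ultimately show False by linarith
  qed
  ultimately have "2 \<le> j" "j < l" using j(1,2) by auto
  moreover have "2 * half_head j = 2 * a - 2 * 2 ^ t"
    using head_j double_half_head[OF j(2)] pow_Suc by simp
  with assms(5) have "a = half_head j + 2 ^ t" by simp
  ultimately show ?thesis using that mj tail_j by blast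
qed

text \<open>Taking the power of two minimal is what forces the gap between the exponents at the cut.\<close>
lemma QB_dyadic_large_imp_B2:
  assumes "b + 2 \<le> a" "a + b = N" "dyadic_large a b"
  obtains j where "2 \<le> j" "j < l" "m (Suc j) + 1 < m j" "(a, b) = qb_pair (B2 j)"
proof -
  let ?Q = "\<lambda>t. 2 ^ t dvd a \<and> a - b \<le> 2 ^ t \<and> 2 ^ (t + 1) \<le> a"
  obtain t where Q: "?Q t" and minimal: "\<And>u. u < t \<Longrightarrow> \<not> ?Q u"
    using assms(3) exists_least_iff[of ?Q] unfolding dyadic_large_def by blast
  from Q assms(1) have "t \<ge> 1" by (cases t) auto
  from Q assms(1,2) obtain j where j: "2 \<le> j" "j < l" "m j = t"
    and tail_j: "tail j = 2 ^ Suc t - (a - b)" and a: "a = half_head j + 2 ^ t"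
    by (elim dyadic_large_cut) auto
  have "m (Suc j) + 1 < m j"
  proof (rule ccontr)
    assume "\<not> m (Suc j) + 1 < m j"
    moreover have "m (Suc j) < m j" using j by (intro exponent_decr) auto
    ultimately have m_Suc: "m (Suc j) = t - 1" using j(3) by linarith
    have pow_t: "(2 :: nat) ^ t = 2 * 2 ^ (t - 1)" using \<open>t \<ge> 1\<close> by (cases t) auto
    have "2 ^ (t - 1) \<le> tail (Suc j)" using pow_le_tail[of "Suc j"] j m_Suc by simp
    moreover have "tail j = 2 ^ t + tail (Suc j)" using tail_Suc[of j] j by simp
    moreover have "a - b \<le> 2 ^ t" using Q by simp
    ultimately have "a - b \<le> 2 ^ (t - 1)" using tail_j pow_t power_Suc[of "2 :: nat" t] by linarith
    moreover have "2 ^ (t - 1) dvd a"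
    proof -
      have "(2 :: nat) ^ (t - 1) dvd 2 ^ t" by (rule le_imp_power_dvd) simp
      then show ?thesis using Q by (blast intro: dvd_trans)
    qed
    moreover have "2 ^ (t - 1 + 1) \<le> a" using Q \<open>t \<ge> 1\<close> by simp
    ultimately have "?Q (t - 1)" by blast
    with minimal[of "t - 1"] \<open>t \<ge> 1\<close> show False by simp
  qed
  moreover have "(a, b) = qb_pair (B2 j)" unfolding qb_pair_def using a j(3) assms(2) by auto
  ultimately show ?thesis using that j by blast
qed

lemma QB_eq_qb_pair_image: "QB N = qb_pair ` qb_labels"
proof
  show "qb_pair ` qb_labels \<subseteq> QB N" using qb_pair_in_QB by blast
next
  show "QB N \<subseteq> qb_pair ` qb_labels"
  proof clarify
    fix a b
    assume "(a, b) \<in> QB N"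
    then have ab: "b \<le> a" "1 \<le> b" "a + b = N" "dyadic_split a b"
      unfolding QB_eq_dyadic_split by auto
    have "a \<noteq> b"
    proof
      assume "a = b"
      with ab(3) have "N = 2 * b" by simp
      with odd_N show False by simp
    qed
    then consider "a = b + 1" | "b + 2 \<le> a" using ab(1) by linarith
    then show "(a, b) \<in> qb_pair ` qb_labels"
    proof cases
      case 1
      then have "(a, b) = qb_pair B1"
        using ab(3) N_eq_half_head_last unfolding qb_pair_def by auto
      then show ?thesis unfolding qb_labels_def by blast
    next
      case 2
      from ab(4) consider "dyadic_small a b" | "dyadic_large a b"
        unfolding dyadic_split_def by blast
      then show ?thesis
      proof cases
        case 1
        with 2 ab obtain j where "2 \<le> j" "j < l" "m j + 1 < m (j - 1)" "(a, b) = qb_pair (B3 j)"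
          by (elim QB_dyadic_small_imp_B3)
        then show ?thesis using B3_in_qb_labels by (metis image_eqI)
      next
        case 2
        with \<open>b + 2 \<le> a\<close> ab obtain j
          where "2 \<le> j" "j < l" "m (Suc j) + 1 < m j" "(a, b) = qb_pair (B2 j)"
          by (elim QB_dyadic_large_imp_B2)
        then show ?thesis using B2_in_qb_labels by (metis image_eqI)
      qed
    qed
  qed
qed

text \<open>The labels are told apart by the binary length of the difference of the pair.\<close>
definition qb_level :: "qb_label \<Rightarrow> nat" where
  "qb_level lab = (case lab of B1 \<Rightarrow> 0 | B2 j \<Rightarrow> m j - 1 | B3 j \<Rightarrow> m j | B4 \<Rightarrow> undefined)"

lemma floor_log_qb_pair_diff:
  assumes "lab \<in> qb_labels"
  shows "floor_log (fst (qb_pair lab) - snd (qb_pair lab)) = qb_level lab"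
  using assms
proof (cases rule: qb_labels_cases)
  case B1
  then show ?thesis by (simp add: qb_pair_def qb_level_def)
next
  case (B2 j)
  have N: "N = 2 * half_head j + 2 ^ m j + tail (Suc j)"
    using N_eq_half_head_tail[of j] tail_Suc[of j] B2 by simp
  have pow: "(2 :: nat) ^ m j = 2 * 2 ^ (m j - 1)" using B2(4) by (cases "m j") auto
  have "(1 :: nat) \<le> 2 ^ m (Suc j)" by simp
  also have "\<dots> \<le> tail (Suc j)" using B2 by (intro pow_le_tail) auto
  finally have tail_pos: "1 \<le> tail (Suc j)" .
  have "tail (Suc j) < 2 ^ (m (Suc j) + 1)" using B2 by (intro tail_less) auto
  also have "\<dots> \<le> 2 ^ (m j - 1)" using B2(4) by (intro power_increasing) auto
  finally have "tail (Suc j) < 2 ^ (m j - 1)" .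
  with tail_pos have "floor_log (2 ^ m j - tail (Suc j)) = m j - 1"
    using pow by (intro floor_log_eqI) auto
  with B2 N show ?thesis by (simp add: qb_pair_def qb_level_def)
next
  case (B3 j)
  have "N = 2 * half_head j + tail j" using B3 by (intro N_eq_half_head_tail) auto
  moreover have "floor_log (tail j) = m j"
    using pow_le_tail[of j] tail_less[of j] B3 by (intro floor_log_eqI) auto
  ultimately show ?thesis using B3 by (simp add: qb_pair_def qb_level_def)
qed

lemma qb_level_pos:
  assumes "lab \<in> qb_labels" "lab \<noteq> B1"
  shows "1 \<le> qb_level lab"
  using assms(1)
proof (cases rule: qb_labels_cases)
  case (B2 j)
  then show ?thesis by (simp add: qb_level_def)
next
  case (B3 j)
  then have "1 \<le> m j" by (intro exponent_pos) auto
  with B3 show ?thesis by (simp add: qb_level_def)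
qed (use assms(2) in simp)

lemma qb_level_B2_ne_B3:
  assumes "B2 j \<in> qb_labels" "B3 j' \<in> qb_labels"
  shows "qb_level (B2 j) \<noteq> qb_level (B3 j')"
proof
  assume "qb_level (B2 j) = qb_level (B3 j')"
  moreover have "2 \<le> j" "j < l" "m (Suc j) + 1 < m j" "2 \<le> j'" "j' < l"
    using assms two_le_length unfolding qb_labels_def by auto
  ultimately have mj: "m j = m j' + 1" by (simp add: qb_level_def)
  show False
  proof (cases "j < j'")
    case True
    with \<open>j' < l\<close> have "m j' + (j' - Suc j) \<le> m (Suc j)" by (intro exponent_decr_le) auto
    with mj \<open>m (Suc j) + 1 < m j\<close> show False by linarith
  next
    case False
    with \<open>2 \<le> j'\<close> \<open>j < l\<close> have "m j + (j - j') \<le> m j'" by (intro exponent_decr_le) auto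
    with mj show False by linarith
  qed
qed

lemma qb_level_inj: "inj_on qb_level qb_labels"
proof (rule inj_onI)
  fix x y
  assume x: "x \<in> qb_labels" and y: "y \<in> qb_labels" and eq: "qb_level x = qb_level y"
  have m_eq: "i = i'" if "m i = m i'" "1 \<le> i" "i < l" "1 \<le> i'" "i' < l" for i i'
    using exponent_inj that by (auto dest: inj_onD)
  show "x = y"
    using x
  proof (cases rule: qb_labels_cases)
    case B1
    with y eq show ?thesis using qb_level_pos[of y] by (auto simp: qb_level_def)
  next
    case (B2 j)
    from y show ?thesis
    proof (cases rule: qb_labels_cases)
      case B1
      with x eq show ?thesis using qb_level_pos[of x] by (auto simp: qb_level_def)
    next
      case (B2 j')
      with \<open>x = B2 j\<close> \<open>m (Suc j) + 1 < m j\<close> eq have "m j = m j'" by (simp add: qb_level_def)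
      with B2 \<open>x = B2 j\<close> \<open>2 \<le> j\<close> \<open>j < l\<close> show ?thesis using m_eq[of j j'] by simp
    next
      case (B3 j')
      with x y eq \<open>x = B2 j\<close> show ?thesis using qb_level_B2_ne_B3 by auto
    qed
  next
    case (B3 j)
    from y show ?thesis
    proof (cases rule: qb_labels_cases)
      case B1
      with x eq show ?thesis using qb_level_pos[of x] by (auto simp: qb_level_def)
    next
      case (B2 j')
      with x y eq \<open>x = B3 j\<close> show ?thesis using qb_level_B2_ne_B3 by fastforce
    next
      case (B3 j')
      with \<open>x = B3 j\<close> eq have "m j = m j'" by (simp add: qb_level_def)
      with B3 \<open>x = B3 j\<close> \<open>2 \<le> j\<close> \<open>j < l\<close> show ?thesis using m_eq[of j j'] by simp
    qed
  qed
qed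

lemma qb_pair_inj: "inj_on qb_pair qb_labels"
  by (rule inj_onI) (metis floor_log_qb_pair_diff qb_level_inj inj_onD)

end

lemma QB_pow2_mult_image:
  fixes f g :: "'a \<Rightarrow> nat \<times> nat"
  assumes odd: "odd n0" and QB: "QB n0 = f ` A" and inj: "inj_on f A" and "c \<notin> A"
    and g_A: "\<And>x. x \<in> A \<Longrightarrow> g x = map_prod ((*) (2 ^ k)) ((*) (2 ^ k)) (f x)"
    and g_c: "g c = (2 ^ k * n0 div 2, 2 ^ k * n0 div 2)"
  shows "QB (2 ^ k * n0) = g ` (A \<union> (if k \<ge> 1 then {c} else {}))
    \<and> inj_on g (A \<union> (if k \<ge> 1 then {c} else {}))"
proof
  let ?scale = "map_prod ((*) (2 ^ k)) ((*) (2 ^ k)) :: nat \<times> nat \<Rightarrow> nat \<times> nat"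
  have g_image: "g ` A = ?scale ` QB n0"
    unfolding QB image_image using g_A by simp
  from odd have "n0 \<ge> 1" by (cases n0) auto
  then show "QB (2 ^ k * n0) = g ` (A \<union> (if k \<ge> 1 then {c} else {}))"
    using QB_pow2_mult[of n0 k] g_image g_c by auto
  have "inj ?scale"
  proof (rule injI)
    fix x y :: "nat \<times> nat"
    assume "?scale x = ?scale y"
    then show "x = y" by (cases x, cases y) simp
  qed
  then have "inj_on ?scale (f ` A)" by (rule inj_on_subset) simp
  with inj have "inj_on (?scale \<circ> f) A" by (rule comp_inj_on)
  then have "inj_on g A" using inj_on_cong[of A g "?scale \<circ> f"] g_A by simp
  moreover have "g c \<notin> g ` A"
  proof
    assume "g c \<in> g ` A"
    then obtain a b where "(a, b) \<in> QB n0" "2 ^ k * a = 2 ^ k * b"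
      using g_image g_c by auto
    with odd show False unfolding QB_def by auto
  qed
  ultimately show "inj_on g (A \<union> (if k \<ge> 1 then {c} else {}))"
    using \<open>c \<notin> A\<close> by auto
qed

theorem proposition3:
  fixes n k l :: nat and m :: "nat \<Rightarrow> nat"
  assumes n2: "n \<ge> 2"
    and kdef: "2 ^ k dvd n" "\<not> 2 ^ Suc k dvd n"
    and l1: "l \<ge> 1"
    and mdec: "\<forall>i\<in>{1..<l}. m i > m (Suc i)"
    and ml: "m l = 0"
    and bin: "n div 2 ^ k = (\<Sum>i=1..l. 2 ^ m i)"
  shows "(l = 1 \<longrightarrow> QB n = {(n div 2, n div 2)}) \<and>
         (l > 1 \<longrightarrow>
           (let s = (\<lambda>j. \<Sum>i=1..<j. (2::nat) ^ (m i - 1));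
                P = (\<lambda>lab. case lab of
                        B1 \<Rightarrow> (2 ^ k * (s l + 1), 2 ^ k * s l)
                      | B2 j \<Rightarrow> (2 ^ k * (s j + 2 ^ m j), n - 2 ^ k * (s j + 2 ^ m j))
                      | B3 j \<Rightarrow> (n - 2 ^ k * s j, 2 ^ k * s j)
                      | B4 \<Rightarrow> (n div 2, n div 2));
                L = {B1}
                    \<union> {B2 j | j. j \<in> {2..l-1} \<and> m j > m (Suc j) + 1}
                    \<union> {B3 j | j. j \<in> {2..l-1} \<and> m j + 1 < m (j - 1)}
                    \<union> (if k \<ge> 1 then {B4} else {})
            in QB n = P ` L \<and> inj_on P L))"
proof -
  define n0 where "n0 = n div 2 ^ k"
  have n: "n = 2 ^ k * n0" using kdef(1) unfolding n0_def by simp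
  show ?thesis
  proof (cases "l = 1")
    case True
    with bin ml have "n0 = 1" unfolding n0_def by simp
    with n n2 have "k \<ge> 1" by (cases k) auto
    with True n \<open>n0 = 1\<close> show ?thesis using QB_pow2_mult[of 1 k] QB_1 by simp
  next
    case False
    with l1 mdec ml interpret nontrivial_binary_expansion m l by unfold_locales auto
    from n bin have n_N: "n = 2 ^ k * N" unfolding n0_def by simp
    show ?thesis
      unfolding Let_def half_head_def[symmetric] qb_labels_def[symmetric] n_N
      by (intro conjI[OF impI impI] QB_pow2_mult_image[where f = qb_pair]
          odd_N QB_eq_qb_pair_image qb_pair_inj)
        (use False in \<open>auto simp: qb_labels_def qb_pair_def diff_mult_distrib2\<close>)
  qed
qed

end
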